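(* Let $x = (x_1, \ldots, x_n)$ and $y = (y_1, \ldots, y_n)$ be vectors in $\mathbb{R}^n$ with $\sum_i x_i = \sum_i y_i = 0$. Then $$\sum_{1 \leq i < j \leq n} (x_i - x_j)^2 (y_i - y_j)^2 \geq \|x\|^2 \|y\|^2,$$ where $\|\cdot\|$ is the Euclidean norm. *)

theory Defs
  imports "HOL-Analysis.Analysis"
begin

end

theory Submission
  imports Defs
begin

text \<open>Doubling the sum over pairs \<open>i < j\<close> gives the full double sum over \<open>i, j\<close>. Expanding
  \<open>(x\<^sub>i - x\<^sub>j)\<^sup>2 (y\<^sub>i - y\<^sub>j)\<^sup>2\<close> and summing, every term containing a lone factor \<open>x\<^sub>j\<close> or
  \<open>y\<^sub>j\<close> vanishes because both vectors have mean zero, which leaves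
  \<open>2n \<Sum> x\<^sub>i\<^sup>2 y\<^sub>i\<^sup>2 + 2 \<parallel>x\<parallel>\<^sup>2 \<parallel>y\<parallel>\<^sup>2 + 4 \<langle>x, y\<rangle>\<^sup>2 \<ge> 2 \<parallel>x\<parallel>\<^sup>2 \<parallel>y\<parallel>\<^sup>2\<close>.\<close>

lemma sum_pairs_less_symmetric:
  fixes f :: "nat \<Rightarrow> nat \<Rightarrow> 'a::comm_semiring_1"
  assumes "\<And>i j. f i j = f j i" and "\<And>i. f i i = 0"
  shows "2 * (\<Sum>j\<in>{1..n}. \<Sum>i\<in>{1..<j}. f i j) = (\<Sum>j\<in>{1..n}. \<Sum>i\<in>{1..n}. f i j)"
proof (induction n)
  case 0
  then show ?case by simp
next
  case (Suc n)
  have "(\<Sum>j\<in>{1..Suc n}. \<Sum>i\<in>{1..Suc n}. f i j)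
      = (\<Sum>j\<in>{1..n}. \<Sum>i\<in>{1..n}. f i j) + (\<Sum>j\<in>{1..n}. f (Suc n) j)
        + (\<Sum>i\<in>{1..n}. f i (Suc n)) + f (Suc n) (Suc n)"
    by (simp add: sum.distrib algebra_simps)
  also have "\<dots> = (\<Sum>j\<in>{1..n}. \<Sum>i\<in>{1..n}. f i j) + 2 * (\<Sum>i\<in>{1..n}. f i (Suc n))"
    by (simp only: assms(1)[of "Suc n"] assms(2) mult_2 add.assoc add_0_right)
  finally show ?case
    using Suc.IH by (simp add: atLeastLessThanSuc_atLeastAtMost algebra_simps)
qed

lemma double_sum_sq_diff_mult_sq_diff:
  fixes x y :: "'b \<Rightarrow> 'a::comm_ring_1"
  assumes "(\<Sum>i\<in>I. x i) = 0" and "(\<Sum>i\<in>I. y i) = 0"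
  shows "(\<Sum>j\<in>I. \<Sum>i\<in>I. (x i - x j)^2 * (y i - y j)^2)
       = 2 * of_nat (card I) * (\<Sum>i\<in>I. x i^2 * y i^2)
         + 2 * (\<Sum>i\<in>I. x i^2) * (\<Sum>i\<in>I. y i^2) + 4 * (\<Sum>i\<in>I. x i * y i)^2"
proof -
  have pointwise: "(x i - x j)^2 * (y i - y j)^2
      = x i^2 * y i^2 + x j^2 * y j^2 + x i^2 * y j^2 + x j^2 * y i^2
        + 4 * (x i * y i) * (x j * y j)
        - 2 * (x i^2 * y i) * y j - 2 * (x j^2 * y j) * y i
        - 2 * (x i * y i^2) * x j - 2 * (x j * y j^2) * x i" for i j
    by (simp add: power2_eq_square algebra_simps)
  have mean_zero_terms:
      "(\<Sum>j\<in>I. \<Sum>i\<in>I. 2 * (x i^2 * y i) * y j) = 0"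
      "(\<Sum>j\<in>I. \<Sum>i\<in>I. 2 * (x j^2 * y j) * y i) = 0"
      "(\<Sum>j\<in>I. \<Sum>i\<in>I. 2 * (x i * y i^2) * x j) = 0"
      "(\<Sum>j\<in>I. \<Sum>i\<in>I. 2 * (x j * y j^2) * x i) = 0"
    using assms by (simp_all add: sum_distrib_left[symmetric] sum_distrib_right[symmetric])
  have product_terms:
      "(\<Sum>j\<in>I. \<Sum>i\<in>I. x i^2 * y j^2) = (\<Sum>i\<in>I. x i^2) * (\<Sum>i\<in>I. y i^2)"
      "(\<Sum>j\<in>I. \<Sum>i\<in>I. x j^2 * y i^2) = (\<Sum>i\<in>I. x i^2) * (\<Sum>i\<in>I. y i^2)"
      "(\<Sum>j\<in>I. \<Sum>i\<in>I. 4 * (x i * y i) * (x j * y j)) = 4 * (\<Sum>i\<in>I. x i * y i)^2"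
    by (simp_all add: sum_distrib_left[symmetric] sum_distrib_right[symmetric])
      (simp add: sum_distrib_left sum_distrib_right power2_eq_square mult.assoc)
  have diagonal_terms:
      "(\<Sum>j\<in>I. \<Sum>i\<in>I. x i^2 * y i^2) = of_nat (card I) * (\<Sum>i\<in>I. x i^2 * y i^2)"
      "(\<Sum>j\<in>I. \<Sum>i\<in>I. x j^2 * y j^2) = of_nat (card I) * (\<Sum>i\<in>I. x i^2 * y i^2)"
    by (simp_all add: sum_distrib_left)
  show ?thesis
    unfolding pointwise sum.distrib sum_subtractf mean_zero_terms product_terms diagonal_terms
    by (simp add: algebra_simps)
qed

theorem lemma3:
  fixes n :: nat and x y :: "nat \<Rightarrow> real"
  assumes "(\<Sum>i\<in>{1..n}. x i) = 0" and "(\<Sum>i\<in>{1..n}. y i) = 0"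
  shows "(\<Sum>j\<in>{1..n}. \<Sum>i\<in>{1..<j}. (x i - x j)^2 * (y i - y j)^2)
           \<ge> (\<Sum>i\<in>{1..n}. (x i)^2) * (\<Sum>i\<in>{1..n}. (y i)^2)"
proof -
  have "2 * (\<Sum>j\<in>{1..n}. \<Sum>i\<in>{1..<j}. (x i - x j)^2 * (y i - y j)^2)
      = (\<Sum>j\<in>{1..n}. \<Sum>i\<in>{1..n}. (x i - x j)^2 * (y i - y j)^2)"
    by (rule sum_pairs_less_symmetric) (simp_all add: power2_commute)
  also have "\<dots> = 2 * real (card {1..n}) * (\<Sum>i\<in>{1..n}. x i^2 * y i^2)
      + 2 * (\<Sum>i\<in>{1..n}. x i^2) * (\<Sum>i\<in>{1..n}. y i^2) + 4 * (\<Sum>i\<in>{1..n}. x i * y i)^2"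
    using assms by (rule double_sum_sq_diff_mult_sq_diff)
  also have "\<dots> \<ge> 2 * (\<Sum>i\<in>{1..n}. x i^2) * (\<Sum>i\<in>{1..n}. y i^2)"
    by (simp add: sum_nonneg)
  finally show ?thesis by simp
qed

end
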